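(* In the setting below, if $\{\mathbb G(t)\}$ is uniformly strongly connected, then the sequence of stochastic matrices $\{S(t)\}$ has a unique absolute probability sequence $\{\pi(t)\}$, and it is given by $\pi_i(t)=\frac{y_i(t)}{n}$ for all $i\in\mathcal V$ and $t\ge0$. In particular $y^\top(t)=y^\top(t+1)S(t)$ for all $t\ge0$.
   Context: Setting. Fix $n$ agents, $\mathcal V=\{1,\dots,n\}$. For each $t\in\{0,1,2,\dots\}$, $\mathbb G(t)=(\mathcal V,\mathcal E(t))$ is a directed graph containing a self-arc $(i,i)$ at every vertex; $\mathcal N_i(t)=\{j:(j,i)\in\mathcal E(t)\}$ and $\mathcal N_i^-(t)=\{k:(i,k)\in\mathcal E(t)\}$. Weights $w_{ij}(t)$ are positive for $j\in\mathcal N_i(t)$ and $w_{ij}(t)=0$ otherwise, and satisfy: there is $\beta>0$ with $w_{ij}(t)\ge\beta$ whenever $j\in\mathcal N_i(t)$, and $\sum_{j\in\mathcal N_i^-(t)}w_{ji}(t)=1$ for all $i,t$. The sequence $\{\mathbb G(t)\}$ is uniformly strongly connected if there is a positive integer $L$ such that for every $t\ge0$ the directed graph with vertex set $\mathcal V$ and edge set $\bigcup_{k=t}^{t+L-1}\mathcal E(k)$ is strongly connected. The $y$-iteration of push-sum: $y_i(t+1)=\sum_{j}w_{ij}(t)y_j(t)$, $y_i(0)=1$. Define the row-stochastic matrix $S(t)$ with entries $s_{ij}(t)=w_{ij}(t)y_j(t)/y_i(t+1)$. Definition: for a sequence $\{S(t)\}_{t\ge0}$ of (row) stochastic matrices,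 a sequence of stochastic vectors $\{\pi(t)\}_{t\ge0}$ (nonnegative entries summing to one) is an absolute probability sequence if $\pi^\top(t)=\pi^\top(t+1)S(t)$ for all $t\ge0$. *)

theory Defs
  imports "HOL-Analysis.Analysis"
begin

text \<open>Agents are 0,...,n-1. A time-varying graph is E :: nat => (nat * nat) set,
  E t being the edge set at time t. Weights w t i j stand for w_ij(t).\<close>

definition in_nbrs :: "(nat \<Rightarrow> (nat \<times> nat) set) \<Rightarrow> nat \<Rightarrow> nat \<Rightarrow> nat set" where
  "in_nbrs E t i = {j. (j, i) \<in> E t}"

definition out_nbrs :: "(nat \<Rightarrow> (nat \<times> nat) set) \<Rightarrow> nat \<Rightarrow> nat \<Rightarrow> nat set" where
  "out_nbrs E t i = {k. (i, k) \<in> E t}"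

definition push_sum_setting ::
  "nat \<Rightarrow> (nat \<Rightarrow> (nat \<times> nat) set) \<Rightarrow> (nat \<Rightarrow> nat \<Rightarrow> nat \<Rightarrow> real) \<Rightarrow> bool" where
  "push_sum_setting n E w \<longleftrightarrow>
     (\<forall>t. E t \<subseteq> {0..<n} \<times> {0..<n}) \<and>
     (\<forall>t. \<forall>i<n. (i, i) \<in> E t) \<and>
     (\<forall>t. \<forall>i<n. \<forall>j<n. (j \<in> in_nbrs E t i \<longrightarrow> w t i j > 0) \<and>
                      (j \<notin> in_nbrs E t i \<longrightarrow> w t i j = 0)) \<and>
     (\<exists>\<beta>>0. \<forall>t. \<forall>i<n. \<forall>j\<in>in_nbrs E t i. w t i j \<ge> \<beta>) \<and>
     (\<forall>t. \<forall>i<n. (\<Sum>j\<in>out_nbrs E t i. w t j i) = 1)"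

definition strongly_connected :: "nat \<Rightarrow> (nat \<times> nat) set \<Rightarrow> bool" where
  "strongly_connected n A \<longleftrightarrow> (\<forall>i<n. \<forall>j<n. (i, j) \<in> A\<^sup>*)"

definition uniformly_strongly_connected :: "nat \<Rightarrow> (nat \<Rightarrow> (nat \<times> nat) set) \<Rightarrow> bool" where
  "uniformly_strongly_connected n E \<longleftrightarrow>
     (\<exists>L::nat. L > 0 \<and> (\<forall>t. strongly_connected n (\<Union>k\<in>{t..t + L - 1}. E k)))"

fun push_y :: "nat \<Rightarrow> (nat \<Rightarrow> nat \<Rightarrow> nat \<Rightarrow> real) \<Rightarrow> nat \<Rightarrow> nat \<Rightarrow> real" where
  "push_y n w 0 i = 1"
| "push_y n w (Suc t) i = (\<Sum>j<n. w t i j * push_y n w t j)"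

definition S_mat :: "nat \<Rightarrow> (nat \<Rightarrow> nat \<Rightarrow> nat \<Rightarrow> real) \<Rightarrow> nat \<Rightarrow> nat \<Rightarrow> nat \<Rightarrow> real" where
  "S_mat n w t i j = w t i j * push_y n w t j / push_y n w (Suc t) i"

definition stochastic_vec :: "nat \<Rightarrow> (nat \<Rightarrow> real) \<Rightarrow> bool" where
  "stochastic_vec n p \<longleftrightarrow> (\<forall>i<n. p i \<ge> 0) \<and> (\<Sum>i<n. p i) = 1"

definition abs_prob_seq ::
  "nat \<Rightarrow> (nat \<Rightarrow> nat \<Rightarrow> nat \<Rightarrow> real) \<Rightarrow> (nat \<Rightarrow> nat \<Rightarrow> real) \<Rightarrow> bool" where
  "abs_prob_seq n S \<pi> \<longleftrightarrow>
     (\<forall>t. stochastic_vec n (\<pi> t)) \<and>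
     (\<forall>t. \<forall>j<n. \<pi> t j = (\<Sum>i<n. \<pi> (Suc t) i * S t i j))"

end

theory Submission
  imports Defs
begin

text \<open>Because the columns of W(t) sum to one, y(t) = y(t+1) S(t); y is positive with total
  mass n, so y/n is an absolute probability sequence. For uniqueness, the ratios
  r(t) = \<pi>(t)/y(t) of any absolute probability sequence solve r(t) = W(t)^T r(t+1).
  Uniform strong connectivity makes every product of K = (n-1)L consecutive weight matrices
  entrywise at least \<beta>^K, so going K steps back shrinks the spread max r - min r by the
  factor 1 - \<beta>^K. As y is bounded below by \<beta>^K, r is bounded, hence each r(t) is a constant
  vector, and \<Sigma>\<pi>(t) = 1 forces it to be 1/n.\<close>

lemma rtrancl_exits_set:
  assumes "(a, b) \<in> A\<^sup>*" "a \<in> X" "b \<notin> X"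
  shows "\<exists>u v. (u, v) \<in> A \<and> u \<in> X \<and> v \<notin> X"
  using assms
proof (induction b rule: rtrancl_induct)
  case (step y z)
  then show ?case by (cases "y \<in> X") auto
qed simp

lemma weighted_mean_ge_min:
  fixes p f :: "'a \<Rightarrow> real"
  assumes "finite A" "sum p A = 1" "\<And>a. a \<in> A \<Longrightarrow> 0 \<le> p a"
    and "a0 \<in> A" "\<delta> \<le> p a0" "\<And>a. a \<in> A \<Longrightarrow> f b0 \<le> f a"
  shows "f b0 + \<delta> * (f a0 - f b0) \<le> (\<Sum>a\<in>A. p a * f a)"
proof -
  have "\<delta> * (f a0 - f b0) \<le> p a0 * (f a0 - f b0)"
    using assms by (intro mult_right_mono) auto
  also have "\<dots> \<le> (\<Sum>a\<in>A. p a * (f a - f b0))"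
    using assms by (intro member_le_sum mult_nonneg_nonneg) auto
  also have "\<dots> = (\<Sum>a\<in>A. p a * f a) - f b0"
    using assms(2) by (simp add: algebra_simps sum_subtractf flip: sum_distrib_left)
  finally show ?thesis by simp
qed

text \<open>Both averages lie in [min f + \<delta> diam f, max f - \<delta> diam f].\<close>

lemma weighted_means_dist_le:
  fixes p q f :: "'a \<Rightarrow> real"
  assumes A: "finite A" and sums: "sum p A = 1" "sum q A = 1"
    and \<delta>: "0 \<le> \<delta>" "\<And>a. a \<in> A \<Longrightarrow> \<delta> \<le> p a" "\<And>a. a \<in> A \<Longrightarrow> \<delta> \<le> q a"
    and B: "\<And>a b. a \<in> A \<Longrightarrow> b \<in> A \<Longrightarrow> \<bar>f a - f b\<bar> \<le> B"
  shows "\<bar>(\<Sum>a\<in>A. p a * f a) - (\<Sum>a\<in>A. q a * f a)\<bar> \<le> (1 - \<delta>) * B"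
proof -
  have ne: "A \<noteq> {}" using sums by auto
  obtain a0 where a0: "a0 \<in> A" "Max (f ` A) = f a0" using obtains_MAX[OF A ne] .
  obtain b0 where b0: "b0 \<in> A" "Min (f ` A) = f b0" using obtains_MIN[OF A ne] .
  have max: "f a \<le> f a0" and min: "f b0 \<le> f a" if "a \<in> A" for a
    using that A a0(2) b0(2) by (metis Max_ge Min_le finite_imageI image_eqI)+
  have p: "a \<in> A \<Longrightarrow> 0 \<le> p a" and q: "a \<in> A \<Longrightarrow> 0 \<le> q a" for a
    using \<delta> by (auto intro: order_trans)
  have "p a0 \<le> sum p A" by (rule member_le_sum) (use A a0(1) p in auto)
  then have \<delta>1: "\<delta> \<le> 1" using \<delta>(2)[OF a0(1)] sums(1) by linarith
  have range: "f b0 + \<delta> * (f a0 - f b0) \<le> (\<Sum>a\<in>A. r a * f a)"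
    "(\<Sum>a\<in>A. r a * f a) \<le> f a0 - \<delta> * (f a0 - f b0)"
    if "sum r A = 1" "\<And>a. a \<in> A \<Longrightarrow> 0 \<le> r a" "\<And>a. a \<in> A \<Longrightarrow> \<delta> \<le> r a" for r
  proof -
    show "f b0 + \<delta> * (f a0 - f b0) \<le> (\<Sum>a\<in>A. r a * f a)"
      using weighted_mean_ge_min[OF A that(1,2) a0(1)] that(3) a0(1) min by blast
    have "- f a0 + \<delta> * (- f b0 - - f a0) \<le> (\<Sum>a\<in>A. r a * - f a)"
      using weighted_mean_ge_min[of A r b0 \<delta> "\<lambda>a. - f a" a0] A that b0(1) max by auto
    then show "(\<Sum>a\<in>A. r a * f a) \<le> f a0 - \<delta> * (f a0 - f b0)"
      by (simp add: sum_negf algebra_simps)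
  qed
  have diam: "0 \<le> f a0 - f b0" "f a0 - f b0 \<le> B"
    using max[OF b0(1)] B[OF a0(1) b0(1)] by auto
  have "\<bar>(\<Sum>a\<in>A. p a * f a) - (\<Sum>a\<in>A. q a * f a)\<bar> \<le> (1 - 2 * \<delta>) * (f a0 - f b0)"
    using range[OF sums(1) p \<delta>(2)] range[OF sums(2) q \<delta>(3)] by (simp add: algebra_simps abs_le_iff)
  also have "\<dots> \<le> (1 - \<delta>) * (f a0 - f b0)"
    using \<delta>(1) diam(1) by (intro mult_right_mono) auto
  also have "\<dots> \<le> (1 - \<delta>) * B"
    using \<delta>1 diam(2) by (intro mult_left_mono) auto
  finally show ?thesis .
qed

lemma pow_bound_imp_zero:
  fixes x q C :: real
  assumes "0 \<le> q" "q < 1" "\<And>m. \<bar>x\<bar> \<le> q ^ m * C"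
  shows "x = 0"
proof (rule ccontr)
  assume "x \<noteq> 0"
  then have C: "0 < C" using assms(3)[of 0] by simp
  obtain m where "q ^ m < \<bar>x\<bar> / C"
    using real_arch_pow_inv[of "\<bar>x\<bar> / C" q] \<open>x \<noteq> 0\<close> C assms(2) by auto
  then show False using assms(3)[of m] C by (simp add: pos_less_divide_eq)
qed

text \<open>transition n w t d i j is the (i, j) entry of W(t+d-1) \<dots> W(t+1) W(t).\<close>

fun transition :: "nat \<Rightarrow> (nat \<Rightarrow> nat \<Rightarrow> nat \<Rightarrow> real) \<Rightarrow> nat \<Rightarrow> nat \<Rightarrow> nat \<Rightarrow> nat \<Rightarrow> real" where
  "transition n w t 0 i j = of_bool (i = j)"
| "transition n w t (Suc d) i j = (\<Sum>k<n. w (t + d) i k * transition n w t d k j)"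

locale push_sum_weights =
  fixes n :: nat and E :: "nat \<Rightarrow> (nat \<times> nat) set" and w :: "nat \<Rightarrow> nat \<Rightarrow> nat \<Rightarrow> real"
    and \<beta> :: real and L :: nat
  assumes n_pos: "n \<ge> 1"
    and edges_subset: "\<And>t. E t \<subseteq> {0..<n} \<times> {0..<n}"
    and self_loop: "\<And>t i. i < n \<Longrightarrow> (i, i) \<in> E t"
    and weight_ge: "\<And>t i j. i < n \<Longrightarrow> j < n \<Longrightarrow> (j, i) \<in> E t \<Longrightarrow> \<beta> \<le> w t i j"
    and weight_zero: "\<And>t i j. i < n \<Longrightarrow> j < n \<Longrightarrow> (j, i) \<notin> E t \<Longrightarrow> w t i j = 0"
    and \<beta>_pos: "\<beta> > 0"
    and column_sum: "\<And>t j. j < n \<Longrightarrow> (\<Sum>i<n. w t i j) = 1"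
    and L_pos: "L > 0"
    and window_connected: "\<And>t. strongly_connected n (\<Union>k\<in>{t..t + L - 1}. E k)"
begin

abbreviation y where "y \<equiv> push_y n w"

abbreviation \<Phi> where "\<Phi> \<equiv> transition n w"

abbreviation K where "K \<equiv> (n - 1) * L"

lemma weight_nonneg: "i < n \<Longrightarrow> j < n \<Longrightarrow> 0 \<le> w t i j"
  using weight_ge[of i j t] weight_zero[of i j t] \<beta>_pos by (cases "(j, i) \<in> E t") auto

lemma \<beta>_le_one: "\<beta> \<le> 1"
proof -
  have "\<beta> \<le> w 0 0 0" using weight_ge self_loop n_pos by auto
  also have "\<dots> \<le> (\<Sum>i<n. w 0 i 0)"
    by (rule member_le_sum) (use n_pos weight_nonneg in auto)
  also have "\<dots> = 1" using column_sum n_pos by auto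
  finally show ?thesis .
qed

lemma transition_nonneg: "i < n \<Longrightarrow> j < n \<Longrightarrow> 0 \<le> \<Phi> t d i j"
  by (induction d arbitrary: i) (auto intro!: sum_nonneg mult_nonneg_nonneg weight_nonneg)

lemma transition_column_sum: "j < n \<Longrightarrow> (\<Sum>i<n. \<Phi> t d i j) = 1"
proof (induction d)
  case (Suc d)
  have "(\<Sum>i<n. \<Phi> t (Suc d) i j) = (\<Sum>k<n. \<Sum>i<n. w (t + d) i k * \<Phi> t d k j)"
    using sum.swap by simp
  also have "\<dots> = (\<Sum>k<n. \<Phi> t d k j)"
    using column_sum by (simp flip: sum_distrib_right)
  finally show ?case using Suc by simp
qed simp

lemma push_y_transition: "i < n \<Longrightarrow> y (t + d) i = (\<Sum>j<n. \<Phi> t d i j * y t j)"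
proof (induction d arbitrary: i)
  case (Suc d)
  have "y (t + Suc d) i = (\<Sum>k<n. w (t + d) i k * (\<Sum>j<n. \<Phi> t d k j * y t j))"
    using Suc by simp
  also have "\<dots> = (\<Sum>k<n. \<Sum>j<n. w (t + d) i k * (\<Phi> t d k j * y t j))"
    by (simp add: sum_distrib_left)
  also have "\<dots> = (\<Sum>j<n. \<Sum>k<n. w (t + d) i k * (\<Phi> t d k j * y t j))"
    by (rule sum.swap)
  also have "\<dots> = (\<Sum>j<n. \<Phi> t (Suc d) i j * y t j)"
    by (simp add: sum_distrib_right mult.assoc)
  finally show ?case .
qed simp

text \<open>Solutions of the adjoint recursion r(s) = W(s)^T r(s + 1); the ratios \<pi>(s)/y(s)
  of an absolute probability sequence are of this kind.\<close>

definition backward_solution :: "(nat \<Rightarrow> nat \<Rightarrow> real) \<Rightarrow> bool" where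
  "backward_solution r \<longleftrightarrow> (\<forall>s k. k < n \<longrightarrow> r s k = (\<Sum>i<n. w s i k * r (Suc s) i))"

lemma backward_solution_transition:
  assumes "backward_solution r" "j < n"
  shows "r t j = (\<Sum>i<n. \<Phi> t d i j * r (t + d) i)"
  using assms(2)
proof (induction d arbitrary: j)
  case (Suc d)
  have "r t j = (\<Sum>k<n. \<Phi> t d k j * (\<Sum>i<n. w (t + d) i k * r (Suc (t + d)) i))"
    using Suc assms(1) unfolding backward_solution_def by simp
  also have "\<dots> = (\<Sum>k<n. \<Sum>i<n. \<Phi> t d k j * (w (t + d) i k * r (Suc (t + d)) i))"
    by (simp add: sum_distrib_left)
  also have "\<dots> = (\<Sum>i<n. \<Sum>k<n. \<Phi> t d k j * (w (t + d) i k * r (Suc (t + d)) i))"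
    by (rule sum.swap)
  also have "\<dots> = (\<Sum>i<n. \<Phi> t (Suc d) i j * r (t + Suc d) i)"
    by (simp add: sum_distrib_right sum_distrib_left mult_ac)
  finally show ?case .
qed simp

lemma transition_step_ge:
  assumes "a < n" "b < n" "j < n" "(a, b) \<in> E (t + d)" "\<beta> ^ d \<le> \<Phi> t d a j"
  shows "\<beta> ^ Suc d \<le> \<Phi> t (Suc d) b j"
proof -
  have "\<beta> ^ Suc d \<le> w (t + d) b a * \<Phi> t d a j"
    using weight_ge[of b a "t + d"] assms \<beta>_pos by (simp add: mult_mono)
  also have "\<dots> \<le> (\<Sum>k<n. w (t + d) b k * \<Phi> t d k j)"
    by (rule member_le_sum)
      (use assms weight_nonneg transition_nonneg in \<open>auto intro!: mult_nonneg_nonneg\<close>)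
  finally show ?thesis by simp
qed

definition reached :: "nat \<Rightarrow> nat \<Rightarrow> nat \<Rightarrow> nat set" where
  "reached t d j = {i\<in>{..<n}. \<beta> ^ d \<le> \<Phi> t d i j}"

lemma reached_subset: "reached t d j \<subseteq> {..<n}"
  unfolding reached_def by auto

lemma reached_edge:
  "a \<in> reached t d j \<Longrightarrow> (a, b) \<in> E (t + d) \<Longrightarrow> j < n \<Longrightarrow> b \<in> reached t (Suc d) j"
  using transition_step_ge[of a b j t d] edges_subset[of "t + d"] unfolding reached_def by auto

lemma reached_mono: "d \<le> d' \<Longrightarrow> j < n \<Longrightarrow> reached t d j \<subseteq> reached t d' j"
proof (induction d' rule: dec_induct)
  case (step d')
  then show ?case using reached_edge self_loop reached_subset by blast
qed simp

lemma start_reached: "j < n \<Longrightarrow> j \<in> reached t d j"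
  using reached_mono[of 0 d j t] unfolding reached_def by auto

text \<open>Strong connectivity of the window yields an edge leaving the reached set.\<close>

lemma reached_window_grows:
  assumes j: "j < n" and not_all: "reached t (m * L) j \<noteq> {..<n}"
  shows "reached t (m * L) j \<subset> reached t (Suc m * L) j"
proof -
  let ?R = "reached t (m * L) j"
  obtain b where b: "b < n" "b \<notin> ?R" using not_all reached_subset by blast
  have "(j, b) \<in> (\<Union>k\<in>{t + m * L..t + m * L + L - 1}. E k)\<^sup>*"
    using window_connected[of "t + m * L"] j b unfolding strongly_connected_def by blast
  from rtrancl_exits_set[OF this start_reached[OF j] b(2)]
  obtain u v k where uv: "(u, v) \<in> E k" "u \<in> ?R" "v \<notin> ?R"
    and k: "k \<in> {t + m * L..t + m * L + L - 1}"
    by blast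
  define d where "d = k - t"
  have d: "m * L \<le> d" "Suc d \<le> Suc m * L" "k = t + d"
    using k L_pos unfolding d_def by auto
  have "v \<in> reached t (Suc d) j"
    using reached_edge[of u t d j v] reached_mono[OF d(1) j] uv j d(3) by blast
  then have "v \<in> reached t (Suc m * L) j" using reached_mono[OF d(2) j] by blast
  moreover have "?R \<subseteq> reached t (Suc m * L) j" using reached_mono j by simp
  ultimately show ?thesis using uv(3) by blast
qed

lemma card_reached: "j < n \<Longrightarrow> min n (Suc m) \<le> card (reached t (m * L) j)"
proof (induction m)
  case 0
  then have "reached t (0 * L) j \<noteq> {}" using start_reached by blast
  then have "0 < card (reached t (0 * L) j)"
    by (simp add: card_gt_0_iff finite_subset[OF reached_subset])
  then show ?case by linarith
next
  case (Suc m)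
  show ?case
  proof (cases "reached t (m * L) j = {..<n}")
    case True
    then have "reached t (Suc m * L) j = {..<n}"
      using reached_mono[of "m * L" "Suc m * L" j t] reached_subset[of t "Suc m * L" j] Suc.prems
      by simp
    then show ?thesis by simp
  next
    case False
    then have "card (reached t (m * L) j) < card (reached t (Suc m * L) j)"
      using reached_window_grows Suc.prems by (simp add: psubset_card_mono finite_subset[OF reached_subset])
    then show ?thesis using Suc by linarith
  qed
qed

text \<open>After (n - 1) windows agent j has reached everybody.\<close>

lemma transition_ge_power:
  assumes "i < n" "j < n" "K \<le> d"
  shows "\<beta> ^ d \<le> \<Phi> t d i j"
proof -
  have "card {..<n} \<le> card (reached t K j)"
    using card_reached[OF assms(2), of "n - 1" t] n_pos by simp
  then have "reached t K j = {..<n}"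
    using card_seteq[OF _ reached_subset] by blast
  then show ?thesis
    using reached_mono[OF assms(3,2), of t] assms(1) unfolding reached_def by auto
qed

lemma push_y_ge_power: "i < n \<Longrightarrow> \<beta> ^ s \<le> y s i"
proof (induction s arbitrary: i)
  case (Suc s)
  have y_nonneg: "0 \<le> y s j" if "j < n" for j
    using Suc.IH[OF that] \<beta>_pos by (meson order_trans zero_le_power less_imp_le)
  have "\<beta> ^ Suc s \<le> w s i i * y s i"
    using Suc weight_ge[of i i s] self_loop[of i s] \<beta>_pos by (simp add: mult_mono)
  also have "\<dots> \<le> (\<Sum>j<n. w s i j * y s j)"
    by (intro member_le_sum mult_nonneg_nonneg) (use Suc weight_nonneg y_nonneg in auto)
  finally show ?case by simp
qed simp

lemma push_y_pos: "i < n \<Longrightarrow> 0 < y s i"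
  using push_y_ge_power[of i s] \<beta>_pos by (meson less_le_trans zero_less_power)

lemma push_y_sum: "(\<Sum>i<n. y s i) = real n"
proof (induction s)
  case (Suc s)
  have "(\<Sum>i<n. y (Suc s) i) = (\<Sum>j<n. \<Sum>i<n. w s i j * y s j)"
    using sum.swap by simp
  also have "\<dots> = (\<Sum>j<n. y s j)"
    using column_sum by (simp flip: sum_distrib_right)
  finally show ?case using Suc by simp
qed simp

lemma push_y_ge_uniform: "i < n \<Longrightarrow> \<beta> ^ K \<le> y s i"
proof (cases "K \<le> s")
  case True
  assume i: "i < n"
  have "y s i = (\<Sum>j<n. \<Phi> (s - K) K i j * y (s - K) j)"
    using push_y_transition[OF i, of "s - K" K] True by simp
  also have "\<dots> \<ge> (\<Sum>j<n. \<beta> ^ K * y (s - K) j)"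
    by (intro sum_mono mult_right_mono) (use transition_ge_power i push_y_pos in \<open>auto intro: less_imp_le\<close>)
  finally have "\<beta> ^ K * real n \<le> y s i" by (simp add: push_y_sum flip: sum_distrib_left)
  moreover have "\<beta> ^ K \<le> \<beta> ^ K * real n" using n_pos \<beta>_pos by simp
  ultimately show ?thesis by linarith
next
  case False
  assume i: "i < n"
  have "\<beta> ^ K \<le> \<beta> ^ s" using False \<beta>_pos \<beta>_le_one by (intro power_decreasing) auto
  then show ?thesis using push_y_ge_power[OF i, of s] by linarith
qed

lemma backward_solution_contracts:
  assumes r: "backward_solution r"
    and B: "\<And>a b. a < n \<Longrightarrow> b < n \<Longrightarrow> \<bar>r (t + K) a - r (t + K) b\<bar> \<le> B"
    and ij: "i < n" "j < n"
  shows "\<bar>r t i - r t j\<bar> \<le> (1 - \<beta> ^ K) * B"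
proof -
  have "\<bar>(\<Sum>a<n. \<Phi> t K a i * r (t + K) a) - (\<Sum>a<n. \<Phi> t K a j * r (t + K) a)\<bar>
      \<le> (1 - \<beta> ^ K) * B"
    using ij B \<beta>_pos transition_column_sum transition_ge_power
    by (intro weighted_means_dist_le) auto
  then show ?thesis using backward_solution_transition[OF r] ij by simp
qed

lemma backward_solution_const:
  assumes r: "backward_solution r"
    and C: "\<And>s a b. a < n \<Longrightarrow> b < n \<Longrightarrow> \<bar>r s a - r s b\<bar> \<le> C"
    and ij: "i < n" "j < n"
  shows "r t i = r t j"
proof -
  have "\<bar>r t i - r t j\<bar> \<le> (1 - \<beta> ^ K) ^ m * C" if "i < n" "j < n" for m t i j
    using that
  proof (induction m arbitrary: t i j)
    case (Suc m)
    then have "\<bar>r t i - r t j\<bar> \<le> (1 - \<beta> ^ K) * ((1 - \<beta> ^ K) ^ m * C)"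
      by (intro backward_solution_contracts[OF r]) auto
    then show ?case by (simp add: mult.assoc)
  qed (use C in simp)
  moreover have "0 \<le> 1 - \<beta> ^ K" "1 - \<beta> ^ K < 1"
    using \<beta>_pos \<beta>_le_one by (auto simp: power_le_one)
  ultimately have "r t i - r t j = 0"
    using ij pow_bound_imp_zero[where q = "1 - \<beta> ^ K" and x = "r t i - r t j" and C = C] by blast
  then show ?thesis by simp
qed

lemma push_y_mult_S_mat: "i < n \<Longrightarrow> y (Suc t) i * S_mat n w t i j = w t i j * y t j"
  using push_y_pos[of i "Suc t"] unfolding S_mat_def by simp

lemma push_y_S_mat: "j < n \<Longrightarrow> y t j = (\<Sum>i<n. y (Suc t) i * S_mat n w t i j)"
proof -
  assume j: "j < n"
  have "(\<Sum>i<n. y (Suc t) i * S_mat n w t i j) = (\<Sum>i<n. w t i j * y t j)"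
    using push_y_mult_S_mat by simp
  also have "\<dots> = y t j" using column_sum[OF j] by (simp flip: sum_distrib_right)
  finally show ?thesis by simp
qed

lemma abs_prob_seq_push_y: "abs_prob_seq n (S_mat n w) (\<lambda>t i. y t i / real n)"
  unfolding abs_prob_seq_def stochastic_vec_def
  using push_y_pos push_y_sum push_y_S_mat n_pos
  by (auto simp: less_imp_le simp flip: sum_divide_distrib)

lemma abs_prob_seq_unique:
  assumes \<pi>: "abs_prob_seq n (S_mat n w) \<pi>" and i: "i < n"
  shows "\<pi> t i = y t i / real n"
proof -
  have stoch: "\<And>s. stochastic_vec n (\<pi> s)"
    and step: "\<And>s k. k < n \<Longrightarrow> \<pi> s k = (\<Sum>i<n. \<pi> (Suc s) i * S_mat n w s i k)"
    using \<pi> unfolding abs_prob_seq_def by auto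
  define r where "r s k = \<pi> s k / y s k" for s k
  have \<pi>_eq: "\<pi> s k = r s k * y s k" if "k < n" for s k
    using push_y_pos[OF that, of s] unfolding r_def by simp
  have backward: "backward_solution r"
    unfolding backward_solution_def
  proof (intro allI impI)
    fix s k assume k: "k < n"
    have "\<pi> s k = (\<Sum>i<n. w s i k * r (Suc s) i) * y s k"
      unfolding step[OF k] sum_distrib_right
      using \<pi>_eq push_y_mult_S_mat by (intro sum.cong) (auto simp: mult_ac)
    then show "r s k = (\<Sum>i<n. w s i k * r (Suc s) i)"
      using \<pi>_eq[OF k] push_y_pos[OF k, of s] by simp
  qed
  have bounds: "0 \<le> r s a \<and> r s a \<le> 1 / \<beta> ^ K" if a: "a < n" for s a
  proof -
    have nonneg: "\<And>b. b < n \<Longrightarrow> 0 \<le> \<pi> s b" and sum: "(\<Sum>b<n. \<pi> s b) = 1"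
      using stoch[of s] unfolding stochastic_vec_def by auto
    have "\<pi> s a \<le> (\<Sum>b<n. \<pi> s b)" by (rule member_le_sum) (use a nonneg in auto)
    then have "0 \<le> \<pi> s a" "\<pi> s a \<le> 1" using nonneg[OF a] sum by auto
    moreover have "\<beta> ^ K \<le> y s a" "0 < y s a" using push_y_ge_uniform push_y_pos a by auto
    ultimately show ?thesis using \<beta>_pos unfolding r_def by (simp add: frac_le)
  qed
  have "\<bar>r s a - r s b\<bar> \<le> 1 / \<beta> ^ K" if "a < n" "b < n" for s a b
    using bounds[OF that(1), of s] bounds[OF that(2), of s] by (simp add: abs_le_iff)
  then have const: "r t k = r t 0" if "k < n" for k
    using backward_solution_const[OF backward, of "1 / \<beta> ^ K" k 0] n_pos that by simp
  have "1 = (\<Sum>k<n. \<pi> t k)" using stoch[of t] unfolding stochastic_vec_def by simp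
  also have "\<dots> = (\<Sum>k<n. r t 0 * y t k)"
  proof (rule sum.cong)
    fix k assume "k \<in> {..<n}"
    then show "\<pi> t k = r t 0 * y t k" using \<pi>_eq[of k t] const[of k] by simp
  qed simp
  also have "\<dots> = r t 0 * real n" by (simp add: push_y_sum flip: sum_distrib_left)
  finally have "r t 0 = 1 / real n" using n_pos by (simp add: field_simps)
  then show ?thesis using \<pi>_eq[OF i, of t] const[OF i] by (simp del: \<pi>_eq)
qed

end

text \<open>The column sums in push_sum_setting range over out-neighbours only; since the weights
  vanish off the edges, they are full column sums.\<close>

lemma push_sum_weights_of_setting:
  assumes "n \<ge> 1" "push_sum_setting n E w" "uniformly_strongly_connected n E"
  obtains \<beta> L where "push_sum_weights n E w \<beta> L"
proof -
  note setting = assms(2)[unfolded push_sum_setting_def in_nbrs_def out_nbrs_def mem_Collect_eq]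
  have edges: "\<And>t. E t \<subseteq> {0..<n} \<times> {0..<n}" using setting by blast
  have zero: "\<And>t i j. i < n \<Longrightarrow> j < n \<Longrightarrow> (j, i) \<notin> E t \<Longrightarrow> w t i j = 0"
    using setting by blast
  obtain \<beta> where \<beta>: "\<beta> > 0" "\<And>t i j. i < n \<Longrightarrow> (j, i) \<in> E t \<Longrightarrow> \<beta> \<le> w t i j"
    using setting by blast
  obtain L where L: "L > 0" "\<And>t. strongly_connected n (\<Union>k\<in>{t..t + L - 1}. E k)"
    using assms(3) unfolding uniformly_strongly_connected_def by blast
  have "(\<Sum>i<n. w t i j) = 1" if j: "j < n" for t j
  proof -
    have "(\<Sum>i<n. w t i j) = (\<Sum>i\<in>{k. (j, k) \<in> E t}. w t i j)"
      by (rule sum.mono_neutral_right) (use edges[of t] zero j in auto)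
    then show ?thesis using setting j by simp
  qed
  then have "push_sum_weights n E w \<beta> L"
    using assms(1) edges setting zero \<beta> L by unfold_locales auto
  then show thesis ..
qed

theorem proposition2:
  fixes n :: nat and E :: "nat \<Rightarrow> (nat \<times> nat) set" and w :: "nat \<Rightarrow> nat \<Rightarrow> nat \<Rightarrow> real"
  assumes "n \<ge> 1"
    and "push_sum_setting n E w"
    and "uniformly_strongly_connected n E"
  shows "abs_prob_seq n (S_mat n w) (\<lambda>t i. push_y n w t i / real n)
       \<and> (\<forall>\<pi>. abs_prob_seq n (S_mat n w) \<pi> \<longrightarrow>
              (\<forall>t. \<forall>i<n. \<pi> t i = push_y n w t i / real n))
       \<and> (\<forall>t. \<forall>j<n. push_y n w t j = (\<Sum>i<n. push_y n w (Suc t) i * S_mat n w t i j))"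
proof -
  obtain \<beta> L where "push_sum_weights n E w \<beta> L"
    using push_sum_weights_of_setting[OF assms] .
  then interpret push_sum_weights n E w \<beta> L .
  show ?thesis using abs_prob_seq_push_y abs_prob_seq_unique push_y_S_mat by blast
qed

end
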